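(* Let $G=(V,E,p,(V_{E},V_{O}))$ be a parity game, $v\in V$, and let $\sigma$ be a (history-dependent) strategy of player Odd that is oblivious with respect to odd-dominated cycles, i.e. $\sigma(\lambda\, u\,\lambda'\,u\,\lambda'')=\sigma(\lambda\,u\,\lambda'')$ whenever $u\,\lambda'\,u$ is an odd-dominated cycle. Then $\min_{\pi\in\mathrm{Plays}(\sigma,v)}\theta(\pi)\in\mathbb{M}$.
   Context: A parity game $G=(V,E,p,(V_{E},V_{O}))$: finite $V$ partitioned into $V_{E}$ (Even) and $V_{O}$ (Odd), total edge relation $E$, priorities $p:V\to\mathbb{N}$; $V_i=\{v:p(v)=i\}$. Plays are infinite paths; Even wins iff the least priority occurring infinitely often is even. A strategy of Odd is a partial function $\sigma:V^+\to V$ defined on finite paths ending in $V_{O}$, choosing a successor of the last vertex; $\mathrm{Plays}(\sigma,v)$ is the set of plays starting in $v$ consistent with $\sigma$. An odd-dominated cycle is a path $u\,\lambda'\,u$ (starting and ending at the same vertex) whose minimal priority is odd. Let $d$ be one more than the largest priority. $\mathbb{M}$ consists of $\top$ and all tuples $(m_0,\dots,m_{d-1})\in\mathbb{N}^d$ with $m_i=0$ for even $i$ and $m_i\le|V_i|$ for odd $i$; $\mathbb{M}_{ext}$ consists of $\top$ and all tuples in $\mathbb{N}^d$ that are $0$ at even positions; both are ordered lexicographically with $\top$ maximal. A $k$-dominated stretch is a finite contiguous part of a play whose minimal priority is $k$; its degree is its number of vertices of priority $k$. The value $\theta(\pi)\in\mathbb{M}_{ext}$ of a play $\pi$ is $\top$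 if Odd wins $\pi$, and otherwise the tuple that is $0$ at even positions and, at each odd position $i$, equals the degree of the maximal $i$-dominated stretch that is a prefix of $\pi$ ($0$ if none). *)

theory Defs
  imports Main
begin

definition parity_game :: "'v set \<Rightarrow> ('v \<times> 'v) set \<Rightarrow> ('v \<Rightarrow> nat) \<Rightarrow> 'v set \<Rightarrow> 'v set \<Rightarrow> bool" where
  "parity_game V E p VE VO \<longleftrightarrow>
     finite V \<and> E \<subseteq> V \<times> V \<and> (\<forall>v\<in>V. \<exists>w. (v, w) \<in> E) \<and>
     VE \<inter> VO = {} \<and> VE \<union> VO = V"

definition is_play :: "'v set \<Rightarrow> ('v \<times> 'v) set \<Rightarrow> (nat \<Rightarrow> 'v) \<Rightarrow> bool" where
  "is_play V E \<pi> \<longleftrightarrow> (\<forall>i. \<pi> i \<in> V) \<and> (\<forall>i. (\<pi> i, \<pi> (Suc i)) \<in> E)"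

definition fin_path :: "'v set \<Rightarrow> ('v \<times> 'v) set \<Rightarrow> 'v list \<Rightarrow> bool" where
  "fin_path V E xs \<longleftrightarrow> xs \<noteq> [] \<and> set xs \<subseteq> V \<and>
     (\<forall>i. Suc i < length xs \<longrightarrow> (xs ! i, xs ! Suc i) \<in> E)"

text \<open>A strategy of Odd: a function on finite paths; only its values on finite paths
  ending in VO matter (partial function), and there it must choose a successor.\<close>
definition odd_strategy :: "'v set \<Rightarrow> ('v \<times> 'v) set \<Rightarrow> 'v set \<Rightarrow> ('v list \<Rightarrow> 'v) \<Rightarrow> bool" where
  "odd_strategy V E VO \<sigma> \<longleftrightarrow>
     (\<forall>xs. fin_path V E xs \<and> last xs \<in> VO \<longrightarrow> (last xs, \<sigma> xs) \<in> E)"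

definition plays :: "'v set \<Rightarrow> ('v \<times> 'v) set \<Rightarrow> 'v set \<Rightarrow> ('v list \<Rightarrow> 'v) \<Rightarrow> 'v \<Rightarrow> (nat \<Rightarrow> 'v) set" where
  "plays V E VO \<sigma> v = {\<pi>. is_play V E \<pi> \<and> \<pi> 0 = v \<and>
      (\<forall>i. \<pi> i \<in> VO \<longrightarrow> \<pi> (Suc i) = \<sigma> (map \<pi> [0..<Suc i]))}"

definition odd_cycle_oblivious :: "'v set \<Rightarrow> ('v \<times> 'v) set \<Rightarrow> ('v \<Rightarrow> nat) \<Rightarrow> 'v set \<Rightarrow> ('v list \<Rightarrow> 'v) \<Rightarrow> bool" where
  "odd_cycle_oblivious V E p VO \<sigma> \<longleftrightarrow>
     (\<forall>l u l' l''. fin_path V E (l @ [u] @ l' @ [u] @ l'') \<and>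
        last (l @ [u] @ l' @ [u] @ l'') \<in> VO \<and>
        odd (Min (p ` set (u # l' @ [u]))) \<longrightarrow>
        \<sigma> (l @ [u] @ l' @ [u] @ l'') = \<sigma> (l @ [u] @ l''))"

definition even_wins :: "('v \<Rightarrow> nat) \<Rightarrow> (nat \<Rightarrow> 'v) \<Rightarrow> bool" where
  "even_wins p \<pi> \<longleftrightarrow> even (LEAST k. \<exists>\<^sub>\<infinity>n. p (\<pi> n) = k)"

definition dim :: "'v set \<Rightarrow> ('v \<Rightarrow> nat) \<Rightarrow> nat" where
  "dim V p = Suc (Max (p ` V))"

text \<open>Elements of M_ext: Top or a d-tuple (list of length d).\<close>
datatype mval = Top | Tup "nat list"

fun mle :: "mval \<Rightarrow> mval \<Rightarrow> bool" where
  "mle _ Top = True"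
| "mle Top (Tup _) = False"
| "mle (Tup xs) (Tup ys) = (xs = ys \<or> (xs, ys) \<in> lexord {(a, b). a < b})"

definition M :: "'v set \<Rightarrow> ('v \<Rightarrow> nat) \<Rightarrow> mval set" where
  "M V p = {Top} \<union> {Tup xs | xs. length xs = dim V p \<and>
      (\<forall>i < dim V p. (even i \<longrightarrow> xs ! i = 0) \<and>
                      (odd i \<longrightarrow> xs ! i \<le> card {w \<in> V. p w = i}))}"

text \<open>Degree of the maximal i-dominated stretch that is a prefix of the play:
  number of positions of priority i before the first position of priority < i.\<close>
definition prefix_degree :: "('v \<Rightarrow> nat) \<Rightarrow> (nat \<Rightarrow> 'v) \<Rightarrow> nat \<Rightarrow> nat" where
  "prefix_degree p \<pi> i = card {n. p (\<pi> n) = i \<and> (\<forall>m\<le>n. i \<le> p (\<pi> m))}"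

definition theta :: "'v set \<Rightarrow> ('v \<Rightarrow> nat) \<Rightarrow> (nat \<Rightarrow> 'v) \<Rightarrow> mval" where
  "theta V p \<pi> = (if \<not> even_wins p \<pi> then Top
     else Tup (map (\<lambda>i. if even i then 0 else prefix_degree p \<pi> i) [0..<dim V p]))"

end

theory Submission
  imports Defs "HOL-Library.Infinite_Set"
begin

text \<open>
  Among the values of the plays consistent with \<sigma> there is a lexicographically least one,
  attained by a play \<pi>. Suppose Even wins \<pi> and some odd coordinate i of its value exceeds
  the number of vertices of priority i. By pigeonhole two positions a < b of priority i on
  the maximal i-dominated prefix of \<pi> carry the same vertex, and the cycle between them is
  odd-dominated. Since \<sigma> is oblivious to such cycles, the play with this cycle cut out is
  still consistent with \<sigma>; its coordinates below i are unchanged and coordinate i drops,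
  contradicting minimality.
\<close>

lemma INFM_nat_shift: "(\<exists>\<^sub>\<infinity>n. P (n + k)) \<longleftrightarrow> (\<exists>\<^sub>\<infinity>n::nat. P n)"
  using eventually_sequentially_seg[of "\<lambda>n. \<not> P n" k]
  by (simp add: frequently_def cofinite_eq_sequentially)

lemma upt_split: "a \<le> b \<Longrightarrow> b \<le> c \<Longrightarrow> [a..<c] = [a..<b] @ [b..<c]"
  by (metis le_add_diff_inverse upt_add_eq_append)

lemma lexord_less_map_upt:
  assumes "i < n" "\<And>j. j < i \<Longrightarrow> f j = g j" "f i < (g i :: nat)"
  shows "(map f [0..<n], map g [0..<n]) \<in> lexord {(a, b). a < b}"
proof -
  have "take i (map f [0..<n]) = take i (map g [0..<n])"
    using assms(1,2) by (simp add: take_map take_upt)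
  then show ?thesis
    unfolding lexord_take_index_conv
    by (intro disjI2 exI[of _ i] conjI) (use assms(1,3) in simp_all)
qed

lemma lexord_less_not_mle: "(ys, xs) \<in> lexord {(a, b). a < (b::nat)} \<Longrightarrow> \<not> mle (Tup xs) (Tup ys)"
  using lexord_asym[of "{(a, b). a < (b::nat)}"] lexord_irreflexive[of "{(a, b). a < (b::nat)}"]
  by (auto simp: asym_iff)

lemma exists_mle_least:
  assumes "T \<noteq> {}" "\<And>x. x \<in> T \<Longrightarrow> x = Top \<or> (\<exists>xs. x = Tup xs \<and> length xs = n)"
  shows "\<exists>m\<in>T. \<forall>x\<in>T. mle m x"
proof (cases "\<exists>xs. Tup xs \<in> T")
  case False
  have "mle m x" if "x \<in> T" for m x
  proof -
    have "x = Top" using False assms(2) that by blast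
    then show ?thesis by simp
  qed
  then show ?thesis using assms(1) by blast
next
  case True
  define R where "R = {(a, b). a < (b::nat)}"
  define L where "L = {xs. Tup xs \<in> T}"
  have "wf (lex R)" unfolding R_def by (intro wf_lex wf_less)
  then obtain xs where "xs \<in> L" and "\<And>ys. (ys, xs) \<in> lex R \<Longrightarrow> ys \<notin> L"
    using wfE_min[of "lex R" _ L] True unfolding L_def by blast
  then have xs: "Tup xs \<in> T" and least: "\<And>ys. (ys, xs) \<in> lex R \<Longrightarrow> Tup ys \<notin> T"
    by (simp_all add: L_def)
  have "mle (Tup xs) (Tup ys)" if ys: "Tup ys \<in> T" for ys
  proof -
    have "length xs = n" "length ys = n" using assms(2) xs ys by blast+
    then have "(ys, xs) \<notin> lexord R" using least[of ys] ys by (auto simp: lexord_lex)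
    moreover have "\<forall>a b. (a, b) \<in> R \<or> a = b \<or> (b, a) \<in> R" by (auto simp: R_def)
    ultimately have "xs = ys \<or> (xs, ys) \<in> lexord R" using lexord_linear by blast
    then show ?thesis by (simp add: R_def)
  qed
  then have "mle (Tup xs) x" if "x \<in> T" for x using that by (cases x) simp_all
  then show ?thesis using xs by blast
qed

fun history :: "('v list \<Rightarrow> 'v) \<Rightarrow> 'v \<Rightarrow> nat \<Rightarrow> 'v list" where
  "history f v 0 = [v]"
| "history f v (Suc n) = history f v n @ [f (history f v n)]"

lemma history_eq_map_last: "history f v n = map (\<lambda>k. last (history f v k)) [0..<Suc n]"
proof (induction n)
  case (Suc n)
  have "map (\<lambda>k. last (history f v k)) [0..<Suc (Suc n)] =
        map (\<lambda>k. last (history f v k)) [0..<Suc n] @ [last (history f v (Suc n))]"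
    by (simp only: upt_Suc_append[OF le0] map_append list.map)
  also have "\<dots> = history f v (Suc n)"
    by (simp only: Suc.IH[symmetric] history.simps last_snoc)
  finally show ?case by simp
qed simp

lemma fin_path_snoc:
  assumes "fin_path V E xs" "(last xs, w) \<in> E" "w \<in> V"
  shows "fin_path V E (xs @ [w])"
proof -
  have ne: "xs \<noteq> []" and steps: "\<And>i. Suc i < length xs \<Longrightarrow> (xs ! i, xs ! Suc i) \<in> E"
    using assms(1) by (auto simp: fin_path_def)
  have "((xs @ [w]) ! i, (xs @ [w]) ! Suc i) \<in> E" if i: "Suc i < length (xs @ [w])" for i
  proof (cases "Suc i < length xs")
    case True
    then show ?thesis using steps[OF True] by (simp add: nth_append)
  next
    case False
    then have "i = length xs - 1" using i by simp
    then show ?thesis using ne assms(2) by (simp add: nth_append last_conv_nth)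
  qed
  then show ?thesis using assms(1,3) by (simp add: fin_path_def)
qed

lemma fin_path_history:
  assumes "v \<in> V" "E \<subseteq> V \<times> V" "\<And>xs. fin_path V E xs \<Longrightarrow> (last xs, f xs) \<in> E"
  shows "fin_path V E (history f v n)"
proof (induction n)
  case 0
  then show ?case using assms(1) by (simp add: fin_path_def)
next
  case (Suc n)
  have "(last (history f v n), f (history f v n)) \<in> E" using assms(3)[OF Suc] .
  then show ?case using Suc assms(2) by (auto intro: fin_path_snoc)
qed

lemma exists_play_generated:
  assumes "v \<in> V" "E \<subseteq> V \<times> V" "\<And>xs. fin_path V E xs \<Longrightarrow> (last xs, f xs) \<in> E"
  obtains \<pi> where "is_play V E \<pi>" "\<pi> 0 = v" "\<And>i. \<pi> (Suc i) = f (map \<pi> [0..<Suc i])"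
proof
  define \<pi> where "\<pi> k = last (history f v k)" for k
  have history: "history f v n = map \<pi> [0..<Suc n]" for n
    unfolding \<pi>_def by (rule history_eq_map_last)
  have path: "fin_path V E (map \<pi> [0..<Suc n])" for n
    using fin_path_history[OF assms] history by metis
  show "is_play V E \<pi>"
    unfolding is_play_def
  proof (intro conjI allI)
    show "\<pi> n \<in> V" for n using path[of n] by (auto simp: fin_path_def)
    show "(\<pi> n, \<pi> (Suc n)) \<in> E" for n
      using path[of "Suc n"] unfolding fin_path_def by (auto simp del: upt_Suc)
  qed
  show "\<pi> 0 = v" by (simp add: \<pi>_def)
  show "\<pi> (Suc i) = f (map \<pi> [0..<Suc i])" for i
    using history[of i] by (simp only: \<pi>_def[of "Suc i"] history.simps last_snoc)
qed

lemma plays_nonempty: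
  assumes "parity_game V E p VE VO" "v \<in> V" "odd_strategy V E VO \<sigma>"
  shows "plays V E VO \<sigma> v \<noteq> {}"
proof -
  define f where "f xs = (if last xs \<in> VO then \<sigma> xs else (SOME w. (last xs, w) \<in> E))" for xs
  have "(last xs, f xs) \<in> E" if "fin_path V E xs" for xs
  proof (cases "last xs \<in> VO")
    case True
    then show ?thesis using assms(3) that by (simp add: f_def odd_strategy_def)
  next
    case False
    have "last xs \<in> V" using that by (auto simp: fin_path_def)
    then have "\<exists>w. (last xs, w) \<in> E" using assms(1) by (simp add: parity_game_def)
    then show ?thesis using False unfolding f_def by (simp add: someI_ex[of "\<lambda>w. (last xs, w) \<in> E"])
  qed
  moreover have "E \<subseteq> V \<times> V" using assms(1) by (simp add: parity_game_def)
  ultimately obtain \<pi> where play: "is_play V E \<pi>" "\<pi> 0 = v"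
    and step: "\<And>i. \<pi> (Suc i) = f (map \<pi> [0..<Suc i])"
    using exists_play_generated[OF assms(2)] by blast
  have "\<pi> (Suc i) = \<sigma> (map \<pi> [0..<Suc i])" if "\<pi> i \<in> VO" for i
    using step[of i] that unfolding f_def by (simp add: last_map del: upt_Suc)
  with play have "\<pi> \<in> plays V E VO \<sigma> v" unfolding plays_def by blast
  then show ?thesis by blast
qed

definition skip_index :: "nat \<Rightarrow> nat \<Rightarrow> nat \<Rightarrow> nat" where
  "skip_index a b n = (if n < a then n else n + (b - a))"

definition remove_segment :: "nat \<Rightarrow> nat \<Rightarrow> (nat \<Rightarrow> 'a) \<Rightarrow> nat \<Rightarrow> 'a" where
  "remove_segment a b \<pi> n = \<pi> (skip_index a b n)"

lemma inj_skip_index: "inj (skip_index a b)"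
  by (auto simp: inj_def skip_index_def)

lemma strict_mono_skip_index: "strict_mono (skip_index a b)"
  by (auto simp: strict_mono_def skip_index_def)

lemma range_skip_index: "a \<le> b \<Longrightarrow> range (skip_index a b) = - {a..<b}"
proof (intro set_eqI iffI)
  fix x assume "a \<le> b" "x \<in> - {a..<b}"
  then have "skip_index a b (if x < a then x else x - (b - a)) = x"
    by (auto simp: skip_index_def)
  then show "x \<in> range (skip_index a b)" by (metis rangeI)
qed (auto simp: skip_index_def)

lemma all_le_skip_index_iff:
  assumes "a \<le> b" "\<And>m. a \<le> m \<Longrightarrow> m < b \<Longrightarrow> Q m"
  shows "(\<forall>m \<le> skip_index a b n. Q m) \<longleftrightarrow> (\<forall>m \<le> n. Q (skip_index a b m))"
proof
  assume Q: "\<forall>m \<le> n. Q (skip_index a b m)"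
  show "\<forall>m \<le> skip_index a b n. Q m"
  proof (intro allI impI)
    fix m assume m: "m \<le> skip_index a b n"
    show "Q m"
    proof (cases "m \<in> {a..<b}")
      case False
      then obtain k where k: "m = skip_index a b k"
        using range_skip_index[OF assms(1)] by blast
      then have "k \<le> n" using m strict_mono_less_eq[OF strict_mono_skip_index] by simp
      then show ?thesis using Q k by simp
    qed (use assms(2) in simp)
  qed
qed (simp add: strict_mono_less_eq[OF strict_mono_skip_index])

lemma is_play_remove_segment:
  assumes "is_play V E \<pi>" "\<pi> a = \<pi> b"
  shows "is_play V E (remove_segment a b \<pi>)"
proof -
  have segment_end: "\<pi> (a + (b - a)) = \<pi> a" using assms(2) by (cases "a \<le> b") simp_all
  have "(\<pi> (skip_index a b n), \<pi> (skip_index a b (Suc n))) \<in> E" for n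
  proof -
    consider "Suc n < a" | "Suc n = a" | "a \<le> n" by linarith
    then have "\<pi> (skip_index a b (Suc n)) = \<pi> (Suc (skip_index a b n))"
      by cases (simp_all add: skip_index_def segment_end)
    then show ?thesis using assms(1) by (simp add: is_play_def)
  qed
  then show ?thesis using assms(1) by (simp add: is_play_def remove_segment_def)
qed

lemma map_remove_segment_upt:
  assumes "a < b" "\<pi> a = \<pi> b" "a \<le> i"
  shows "map (remove_segment a b \<pi>) [0..<Suc i] =
    map \<pi> [0..<Suc a] @ map \<pi> [Suc b..<Suc (i + (b - a))]"
proof -
  have "[0..<Suc i] = [0..<Suc a] @ [Suc a..<Suc i]"
    using assms(3) by (simp add: upt_split del: upt_Suc)
  moreover have "map (remove_segment a b \<pi>) [0..<Suc a] = map \<pi> [0..<Suc a]"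
    using assms(1,2) by (simp add: remove_segment_def skip_index_def)
  moreover have "map (remove_segment a b \<pi>) [Suc a..<Suc i] = map \<pi> [Suc b..<Suc (i + (b - a))]"
    using assms(1,3) by (intro nth_equalityI) (simp_all add: remove_segment_def skip_index_def ac_simps del: upt_Suc)
  ultimately show ?thesis by simp
qed

lemma fin_path_map_upt: "is_play V E \<pi> \<Longrightarrow> fin_path V E (map \<pi> [0..<Suc n])"
  by (auto simp: fin_path_def is_play_def simp del: upt_Suc)

lemma odd_cycle_oblivious_upt:
  assumes "odd_cycle_oblivious V E p VO \<sigma>" "fin_path V E (map \<pi> [0..<Suc j])" "\<pi> j \<in> VO"
    and "a < b" "b \<le> j" "\<pi> a = \<pi> b" "odd (Min (p ` \<pi> ` {a..b}))"
  shows "\<sigma> (map \<pi> [0..<Suc j]) = \<sigma> (map \<pi> [0..<Suc a] @ map \<pi> [Suc b..<Suc j])"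
proof -
  define l l' l'' where "l = map \<pi> [0..<a]" and "l' = map \<pi> [Suc a..<b]"
    and "l'' = map \<pi> [Suc b..<Suc j]"
  have "[0..<Suc j] = [0..<a] @ a # [Suc a..<b] @ b # [Suc b..<Suc j]"
  proof -
    have "[0..<Suc j] = [0..<a] @ [a..<b] @ [b..<Suc j]"
      using assms(4,5) upt_split[of 0 a "Suc j"] upt_split[of a b "Suc j"] by simp
    then show ?thesis using assms(4,5) by (simp add: upt_conv_Cons del: upt_Suc)
  qed
  then have history: "map \<pi> [0..<Suc j] = l @ [\<pi> a] @ l' @ [\<pi> a] @ l''"
    using assms(6) by (simp add: l_def l'_def l''_def)
  have "{a..b} = insert a (insert b {Suc a..<b})"
    using assms(4) by auto
  then have "set (\<pi> a # l' @ [\<pi> a]) = \<pi> ` {a..b}"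
    using assms(6) by (simp add: l'_def)
  moreover have "last (map \<pi> [0..<Suc j]) \<in> VO" using assms(3) by simp
  ultimately have "\<sigma> (l @ [\<pi> a] @ l' @ [\<pi> a] @ l'') = \<sigma> (l @ [\<pi> a] @ l'')"
    using assms(1,2,7) unfolding odd_cycle_oblivious_def history by metis
  moreover have "map \<pi> [0..<Suc a] @ map \<pi> [Suc b..<Suc j] = l @ [\<pi> a] @ l''"
    by (simp add: l_def l''_def)
  ultimately show ?thesis by (simp only: history)
qed

lemma remove_segment_in_plays:
  assumes "odd_cycle_oblivious V E p VO \<sigma>" "\<pi> \<in> plays V E VO \<sigma> v"
    and "a < b" "\<pi> a = \<pi> b" "odd (Min (p ` \<pi> ` {a..b}))"
  shows "remove_segment a b \<pi> \<in> plays V E VO \<sigma> v"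
proof -
  define \<pi>' where "\<pi>' = remove_segment a b \<pi>"
  have play: "is_play V E \<pi>" and start: "\<pi> 0 = v"
    and consistent: "\<And>i. \<pi> i \<in> VO \<Longrightarrow> \<pi> (Suc i) = \<sigma> (map \<pi> [0..<Suc i])"
    using assms(2) by (auto simp: plays_def)
  have before: "\<pi>' k = \<pi> k" if "k \<le> a" for k
    using that assms(3,4) by (cases "k = a") (simp_all add: \<pi>'_def remove_segment_def skip_index_def)
  have after: "\<pi>' k = \<pi> (k + (b - a))" if "a \<le> k" for k
    using that by (simp add: \<pi>'_def remove_segment_def skip_index_def)
  have "\<pi>' (Suc i) = \<sigma> (map \<pi>' [0..<Suc i])" if VO: "\<pi>' i \<in> VO" for i
  proof (cases "i < a")
    case True
    then have "map \<pi>' [0..<Suc i] = map \<pi> [0..<Suc i]" using before by simp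
    moreover have "\<pi>' i = \<pi> i" "\<pi>' (Suc i) = \<pi> (Suc i)" using before True by simp_all
    ultimately show ?thesis using consistent[of i] VO by metis
  next
    case False
    define j where "j = i + (b - a)"
    have "fin_path V E (map \<pi> [0..<Suc j])" using play by (rule fin_path_map_upt)
    moreover have "\<pi> j \<in> VO" using VO False after[of i] by (simp add: j_def)
    ultimately have "\<pi> (Suc j) = \<sigma> (map \<pi> [0..<Suc a] @ map \<pi> [Suc b..<Suc j])"
      using odd_cycle_oblivious_upt[OF assms(1) _ _ assms(3) _ assms(4,5)] consistent False assms(3)
      by (simp add: j_def del: upt_Suc)
    then show ?thesis
      using False after[of "Suc i"] map_remove_segment_upt[OF assms(3,4), of i]
      by (simp add: \<pi>'_def j_def del: upt_Suc)
  qed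
  moreover have "\<pi>' 0 = v" using before[of 0] start by simp
  ultimately show ?thesis
    using is_play_remove_segment[OF play assms(4)] by (simp add: plays_def \<pi>'_def)
qed

lemma INFM_remove_segment: "(\<exists>\<^sub>\<infinity>n. P (remove_segment a b \<pi> n)) \<longleftrightarrow> (\<exists>\<^sub>\<infinity>n. P (\<pi> n))"
proof -
  have "(\<exists>\<^sub>\<infinity>n. P (remove_segment a b \<pi> n)) \<longleftrightarrow> (\<exists>\<^sub>\<infinity>n. P (remove_segment a b \<pi> (n + a)))"
    by (rule INFM_nat_shift[symmetric])
  also have "\<dots> \<longleftrightarrow> (\<exists>\<^sub>\<infinity>n. P (\<pi> (n + (a + (b - a)))))"
    by (simp add: remove_segment_def skip_index_def add.assoc)
  also have "\<dots> \<longleftrightarrow> (\<exists>\<^sub>\<infinity>n. P (\<pi> n))"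
    by (rule INFM_nat_shift)
  finally show ?thesis .
qed

lemma even_wins_remove_segment: "even_wins p (remove_segment a b \<pi>) \<longleftrightarrow> even_wins p \<pi>"
proof -
  have "(\<exists>\<^sub>\<infinity>n. p (remove_segment a b \<pi> n) = k) \<longleftrightarrow> (\<exists>\<^sub>\<infinity>n. p (\<pi> n) = k)" for k
    by (rule INFM_remove_segment)
  then show ?thesis by (simp add: even_wins_def)
qed

definition prefix_stretch :: "('v \<Rightarrow> nat) \<Rightarrow> (nat \<Rightarrow> 'v) \<Rightarrow> nat \<Rightarrow> nat set" where
  "prefix_stretch p \<pi> i = {n. p (\<pi> n) = i \<and> (\<forall>m\<le>n. i \<le> p (\<pi> m))}"

lemma prefix_degree_eq_card: "prefix_degree p \<pi> i = card (prefix_stretch p \<pi> i)"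
  by (simp add: prefix_degree_def prefix_stretch_def)

lemma finite_prefix_stretch:
  assumes "even_wins p \<pi>" "odd i"
  shows "finite (prefix_stretch p \<pi> i)"
proof (rule ccontr)
  assume infinite: "infinite (prefix_stretch p \<pi> i)"
  then have "\<exists>\<^sub>\<infinity>n. p (\<pi> n) = i"
    unfolding INFM_iff_infinite by (rule infinite_super[rotated]) (auto simp: prefix_stretch_def)
  moreover have "i \<le> p (\<pi> m)" for m
  proof -
    obtain n where "m \<le> n" "n \<in> prefix_stretch p \<pi> i"
      using infinite unfolding infinite_nat_iff_unbounded_le by blast
    then show ?thesis by (simp add: prefix_stretch_def)
  qed
  ultimately have "(LEAST k. \<exists>\<^sub>\<infinity>n. p (\<pi> n) = k) = i"
    by (intro Least_equality) (auto elim: INFM_E)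
  then show False using assms by (simp add: even_wins_def)
qed

lemma prefix_degree_remove_segment:
  assumes "a \<le> b" "\<And>m. a \<le> m \<Longrightarrow> m < b \<Longrightarrow> j \<le> p (\<pi> m)"
  shows "prefix_degree p (remove_segment a b \<pi>) j = card (prefix_stretch p \<pi> j - {a..<b})"
proof -
  have "prefix_stretch p (remove_segment a b \<pi>) j = skip_index a b -` prefix_stretch p \<pi> j"
    using all_le_skip_index_iff[OF assms(1), of "\<lambda>m. j \<le> p (\<pi> m)"] assms(2)
    by (auto simp: prefix_stretch_def remove_segment_def)
  then have "skip_index a b ` prefix_stretch p (remove_segment a b \<pi>) j = prefix_stretch p \<pi> j - {a..<b}"
    using range_skip_index[OF assms(1)] by auto
  then show ?thesis
    using card_image[OF inj_on_subset[OF inj_skip_index subset_UNIV]] by (metis prefix_degree_eq_card)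
qed

lemma theta_remove_segment_less:
  assumes "even_wins p \<pi>" "odd i" "i < dim V p"
    and "a < b" "p (\<pi> a) = i" "\<forall>m\<le>b. i \<le> p (\<pi> m)"
  obtains xs ys where "theta V p \<pi> = Tup xs" "theta V p (remove_segment a b \<pi>) = Tup ys"
    and "(ys, xs) \<in> lexord {(x, y). x < y}"
proof -
  define \<pi>' where "\<pi>' = remove_segment a b \<pi>"
  define F where "F \<rho> j = (if even j then 0 else prefix_degree p \<rho> j)" for \<rho> j
  have dominated: "j \<le> p (\<pi> m)" if "j \<le> i" "m \<le> b" for j m
    using assms(6) that by (meson le_trans)
  have degree: "prefix_degree p \<pi>' j = card (prefix_stretch p \<pi> j - {a..<b})" if "j \<le> i" for j
    unfolding \<pi>'_def using assms(4) that by (intro prefix_degree_remove_segment) (simp_all add: dominated)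
  have "F \<pi>' j = F \<pi> j" if "j < i" for j
  proof -
    have "prefix_stretch p \<pi> j \<inter> {a..<b} = {}"
      using assms(6) that by (auto simp: prefix_stretch_def) (meson leD less_imp_le_nat)
    then show ?thesis using degree[of j] that by (simp add: F_def prefix_degree_eq_card Diff_triv)
  qed
  moreover have "F \<pi>' i < F \<pi> i"
  proof -
    have "a \<in> prefix_stretch p \<pi> i" using assms(4-6) by (simp add: prefix_stretch_def)
    then have "prefix_stretch p \<pi> i - {a..<b} \<subset> prefix_stretch p \<pi> i" using assms(4) by auto
    then show ?thesis
      using degree[of i] finite_prefix_stretch[OF assms(1,2)] assms(2)
      by (simp add: F_def prefix_degree_eq_card psubset_card_mono)
  qed
  ultimately have less: "(map (F \<pi>') [0..<dim V p], map (F \<pi>) [0..<dim V p]) \<in> lexord {(x, y). x < y}"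
    using assms(3) by (intro lexord_less_map_upt)
  have theta: "theta V p \<rho> = Tup (map (F \<rho>) [0..<dim V p])" if "even_wins p \<rho>" for \<rho>
    using that by (simp add: theta_def F_def)
  have "even_wins p \<pi>'" using assms(1) by (simp add: \<pi>'_def even_wins_remove_segment)
  from that[OF theta[OF assms(1)] theta[OF this, unfolded \<pi>'_def] less[unfolded \<pi>'_def]]
  show ?thesis .
qed

lemma repeated_vertex_in_prefix_stretch:
  assumes "is_play V E \<pi>" "finite V" "card {w \<in> V. p w = i} < prefix_degree p \<pi> i"
  obtains a b where "a < b" "\<pi> a = \<pi> b" "a \<in> prefix_stretch p \<pi> i" "b \<in> prefix_stretch p \<pi> i"
proof -
  have "\<not> inj_on \<pi> (prefix_stretch p \<pi> i)"
  proof
    assume "inj_on \<pi> (prefix_stretch p \<pi> i)"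
    moreover have "\<pi> ` prefix_stretch p \<pi> i \<subseteq> {w \<in> V. p w = i}"
      using assms(1) by (auto simp: prefix_stretch_def is_play_def)
    moreover have "finite {w \<in> V. p w = i}" using assms(2) by simp
    ultimately have "card (prefix_stretch p \<pi> i) \<le> card {w \<in> V. p w = i}"
      by (rule card_inj_on_le)
    then show False using assms(3) by (simp add: prefix_degree_eq_card)
  qed
  then obtain a b where ab: "a \<noteq> b" "\<pi> a = \<pi> b" "a \<in> prefix_stretch p \<pi> i" "b \<in> prefix_stretch p \<pi> i"
    unfolding inj_on_def by blast
  show ?thesis
  proof (cases "a < b")
    case True
    then show ?thesis using that ab by blast
  next
    case False
    then have "b < a" using ab(1) by simp
    then show ?thesis using that[of b a] ab by simp
  qed
qed

lemma prefix_degree_bound_if_least: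
  assumes "odd_cycle_oblivious V E p VO \<sigma>" "finite V" "\<pi> \<in> plays V E VO \<sigma> v"
    and least: "\<forall>\<rho> \<in> plays V E VO \<sigma> v. mle (theta V p \<pi>) (theta V p \<rho>)"
    and "even_wins p \<pi>" "odd i" "i < dim V p"
  shows "prefix_degree p \<pi> i \<le> card {w \<in> V. p w = i}"
proof (rule ccontr)
  assume "\<not> ?thesis"
  then have many: "card {w \<in> V. p w = i} < prefix_degree p \<pi> i" by simp
  have "is_play V E \<pi>" using assms(3) by (simp add: plays_def)
  then obtain a b where ab: "a < b" "\<pi> a = \<pi> b"
    and "a \<in> prefix_stretch p \<pi> i" "b \<in> prefix_stretch p \<pi> i"
    by (rule repeated_vertex_in_prefix_stretch[OF _ assms(2) many])
  then have stretch: "p (\<pi> a) = i" "\<forall>m\<le>b. i \<le> p (\<pi> m)"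
    by (simp_all add: prefix_stretch_def)
  have "i \<in> p ` \<pi> ` {a..b}" using ab(1) stretch(1) by force
  then have "Min (p ` \<pi> ` {a..b}) = i"
    using stretch(2) by (intro Min_eqI) auto
  then have removed: "remove_segment a b \<pi> \<in> plays V E VO \<sigma> v"
    using remove_segment_in_plays[OF assms(1,3) ab] assms(6) by simp
  obtain xs ys where "theta V p \<pi> = Tup xs" "theta V p (remove_segment a b \<pi>) = Tup ys"
    and less: "(ys, xs) \<in> lexord {(x, y). x < y}"
    using theta_remove_segment_less[OF assms(5-7) ab(1) stretch] .
  moreover have "mle (theta V p \<pi>) (theta V p (remove_segment a b \<pi>))"
    using least removed by blast
  ultimately show False using lexord_less_not_mle[OF less] by simp
qed

lemma theta_in_M:
  assumes "\<And>i. even_wins p \<pi> \<Longrightarrow> odd i \<Longrightarrow> i < dim V p \<Longrightarrow> prefix_degree p \<pi> i \<le> card {w \<in> V. p w = i}"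
  shows "theta V p \<pi> \<in> M V p"
  using assms by (auto simp: theta_def M_def)

theorem lemma3:
  fixes V :: "'v set" and E :: "('v \<times> 'v) set" and p :: "'v \<Rightarrow> nat"
    and VE VO :: "'v set" and \<sigma> :: "'v list \<Rightarrow> 'v" and v :: 'v
  assumes "parity_game V E p VE VO"
    and "v \<in> V"
    and "odd_strategy V E VO \<sigma>"
    and "odd_cycle_oblivious V E p VO \<sigma>"
  shows "\<exists>m \<in> theta V p ` plays V E VO \<sigma> v.
           (\<forall>x \<in> theta V p ` plays V E VO \<sigma> v. mle m x) \<and> m \<in> M V p"
proof -
  let ?P = "plays V E VO \<sigma> v"
  have nonempty: "theta V p ` ?P \<noteq> {}" using plays_nonempty[OF assms(1-3)] by blast
  have shape: "x = Top \<or> (\<exists>xs. x = Tup xs \<and> length xs = dim V p)" if "x \<in> theta V p ` ?P" for x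
    using that by (auto simp: theta_def)
  obtain \<pi> where \<pi>: "\<pi> \<in> ?P" and least: "\<forall>\<rho> \<in> ?P. mle (theta V p \<pi>) (theta V p \<rho>)"
    using exists_mle_least[OF nonempty shape] by blast
  have "finite V" using assms(1) by (simp add: parity_game_def)
  then have "theta V p \<pi> \<in> M V p"
    using prefix_degree_bound_if_least[OF assms(4) _ \<pi> least] by (intro theta_in_M)
  then show ?thesis using \<pi> least by (intro bexI[of _ "theta V p \<pi>"]) auto
qed

end
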